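(* Let $\alpha\in(0,1)$, $0\le\gamma\le 1/\alpha$, $n_0,n\in\mathbb N$ with $n_0\le n$, and $t^*\in(0,\alpha]$. Let $\xi_1,\dots,\xi_{n_0}$ be i.i.d. random variables with values in $[0,1]$ and c.d.f. $F_\xi$ satisfying $F_\xi(t)=\gamma t$ for all $t\in[0,t^*]$, and let $\xi_{n_0+1},\dots,\xi_n$ be random variables with values in $[0,1]$, independent of $(\xi_1,\dots,\xi_{n_0})$. For $c_i=i\alpha/n$ let $R'_n=\max\{k\le n:\xi_{k:n}\le c_k\}$ (with $R'_n=-\infty$ if empty) and $V'_n=|\{i\in\{1,\dots,n_0\}:\xi_i\le c_{R'_n}\}|$, where $c_{-\infty}=-\infty$. Let $F_n$ be the empirical c.d.f. of $\xi_1,\dots,\xi_n$, $A_n(t^* )=\{F_n(t)<t/\alpha \text{ for all } t\in(t^*,\alpha]\}$ and $r=\max\{i\in\mathbb N_0: i\alpha/n\le t^*\}$. Then \[ \mathbb E\Big(\frac{V'_n}{R'_n\vee 1}\mathbf 1_{A_n(t^* )}\Big)=\frac{n_0}{n}\gamma\alpha\,\mathrm P\big(D_r^{(1)}(\alpha)\big). \]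
   Context: $\xi_{1:n}\le\dots\le\xi_{n:n}$ are the order statistics of $\xi_1,\dots,\xi_n$. Let $\xi^{(1)}=(\xi_2,\dots,\xi_n)$ with order statistics $\xi^{(1)}_{1:n-1}\le\dots\le\xi^{(1)}_{n-1:n-1}$. For $1\le k<n$, $D_k^{(1)}(\alpha)=\{\xi^{(1)}_{k:n-1}>c_{k+1},\dots,\xi^{(1)}_{n-1:n-1}>c_n\}$; moreover $D_0^{(1)}(\alpha)=\varnothing$ and $D_n^{(1)}(\alpha)=\Omega$ (the whole sample space). *)

theory Defs
  imports "HOL-Probability.Probability"
begin

definition ord_stat :: "nat \<Rightarrow> (nat \<Rightarrow> real) \<Rightarrow> nat \<Rightarrow> real" where
  "ord_stat m x k = sort (map x [1..<Suc m]) ! (k - 1)"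

definition crit :: "real \<Rightarrow> nat \<Rightarrow> nat \<Rightarrow> real" where
  "crit \<alpha> n i = real i * \<alpha> / real n"

definition BH_set :: "nat \<Rightarrow> real \<Rightarrow> (nat \<Rightarrow> real) \<Rightarrow> nat set" where
  "BH_set n \<alpha> x = {k \<in> {1..n}. ord_stat n x k \<le> crit \<alpha> n k}"

text \<open>R'_n; the value 0 encodes R'_n = -infinity (empty set).\<close>
definition BH_R :: "nat \<Rightarrow> real \<Rightarrow> (nat \<Rightarrow> real) \<Rightarrow> nat" where
  "BH_R n \<alpha> x = (if BH_set n \<alpha> x = {} then 0 else Max (BH_set n \<alpha> x))"

text \<open>V'_n; if R'_n = -infinity then c_{R'_n} = -infinity and V'_n = 0.\<close>
definition BH_V :: "nat \<Rightarrow> nat \<Rightarrow> real \<Rightarrow> (nat \<Rightarrow> real) \<Rightarrow> nat" where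
  "BH_V n0 n \<alpha> x = (if BH_set n \<alpha> x = {} then 0
      else card {i \<in> {1..n0}. x i \<le> crit \<alpha> n (BH_R n \<alpha> x)})"

definition emp_cdf :: "nat \<Rightarrow> (nat \<Rightarrow> real) \<Rightarrow> real \<Rightarrow> real" where
  "emp_cdf n x t = real (card {i \<in> {1..n}. x i \<le> t}) / real n"

definition A_event :: "nat \<Rightarrow> real \<Rightarrow> real \<Rightarrow> (nat \<Rightarrow> real) \<Rightarrow> bool" where
  "A_event n \<alpha> tstar x = (\<forall>t \<in> {tstar<..\<alpha>}. emp_cdf n x t < t / \<alpha>)"

definition D1 :: "nat \<Rightarrow> real \<Rightarrow> nat \<Rightarrow> (nat \<Rightarrow> real) \<Rightarrow> bool" where
  "D1 n \<alpha> k x = (if k = 0 then False else if n \<le> k then True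
      else (\<forall>j \<in> {k..n-1}. ord_stat (n - 1) (\<lambda>i. x (i + 1)) j > crit \<alpha> n (j + 1)))"

end

theory Submission
  imports Defs
begin

text \<open>
  Fix i \<le> n0 and let y be the sample with the values at positions 1 and i exchanged.
  If \<xi>_i \<le> c_k, then R'_n = k iff y lies in D_k^(1) \<setminus> D_(k-1)^(1): removing \<xi>_i lowers
  every count #{j. \<xi>_j \<le> c_l} with l \<ge> k by one. Moreover A_n(t*) holds iff R'_n \<le> r. Hence
  V'_n / (R'_n \<or> 1) \<cdot> 1_A equals the sum over i \<le> n0 and 1 \<le> k \<le> r of 1/k times the indicator
  of {\<xi>_i \<le> c_k, y \<in> D_k^(1) \<setminus> D_(k-1)^(1)}. Exchangeability of \<xi>_1, \<dots>, \<xi>_n0 and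
  independence of \<xi>_1 from the remaining values give this event the probability
  \<gamma> c_k (P(D_k^(1)) - P(D_(k-1)^(1))); as c_k / k = \<alpha> / n, the sum over k telescopes to
  P(D_r^(1)) because D_0^(1) = \<emptyset>.
\<close>

section \<open>The step-up procedure in terms of counts\<close>

abbreviation swap1 :: "nat \<Rightarrow> nat \<Rightarrow> nat" where
  "swap1 i \<equiv> Transposition.transpose 1 i"

lemma sorted_nth_le_iff_less_length_filter:
  fixes s :: "'a::linorder list"
  assumes "sorted s" "j < length s"
  shows "s ! j \<le> t \<longleftrightarrow> j < length (filter (\<lambda>v. v \<le> t) s)"
proof
  assume h: "s ! j \<le> t"
  have "{0..j} \<subseteq> {i. i < length s \<and> s ! i \<le> t}"
    using assms h by (auto intro: order_trans[OF sorted_nth_mono[OF assms(1)]])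
  hence "card {0..j} \<le> card {i. i < length s \<and> s ! i \<le> t}"
    by (intro card_mono) auto
  thus "j < length (filter (\<lambda>v. v \<le> t) s)"
    by (simp add: length_filter_conv_card)
next
  assume h: "j < length (filter (\<lambda>v. v \<le> t) s)"
  show "s ! j \<le> t"
  proof (rule ccontr)
    assume "\<not> s ! j \<le> t"
    hence "{i. i < length s \<and> s ! i \<le> t} \<subseteq> {0..<j}"
      using assms by (auto simp: not_le) (metis leI le_less_trans less_le_not_le sorted_nth_mono)
    hence "card {i. i < length s \<and> s ! i \<le> t} \<le> j"
      using card_mono[of "{0..<j}"] by fastforce
    thus False using h by (simp add: length_filter_conv_card)
  qed
qed

lemma ord_stat_le_iff:
  assumes "1 \<le> k" "k \<le> m"
  shows "ord_stat m x k \<le> t \<longleftrightarrow> k \<le> card {j\<in>{1..m}. x j \<le> t}"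
proof -
  let ?s = "sort (map x [1..<Suc m])"
  have "ord_stat m x k \<le> t \<longleftrightarrow> k - 1 < length (filter (\<lambda>v. v \<le> t) ?s)"
    unfolding ord_stat_def using assms by (intro sorted_nth_le_iff_less_length_filter) auto
  also have "length (filter (\<lambda>v. v \<le> t) ?s) = length (filter (\<lambda>v. v \<le> t) (map x [1..<Suc m]))"
    by (metis mset_filter mset_sort size_mset)
  also have "\<dots> = length (filter (\<lambda>j. x j \<le> t) [1..<Suc m])"
    by (simp add: filter_map comp_def)
  also have "\<dots> = card {j\<in>{1..m}. x j \<le> t}"
    by (subst distinct_length_filter) (auto intro!: arg_cong[where f=card])
  finally show ?thesis using assms by auto
qed

lemma crit_mono: "0 < \<alpha> \<Longrightarrow> k \<le> j \<Longrightarrow> crit \<alpha> n k \<le> crit \<alpha> n j"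
  unfolding crit_def by (intro divide_right_mono mult_right_mono) auto

lemma card_le_mono: "s \<le> t \<Longrightarrow> card {j\<in>{1..n::nat}. (x j::real) \<le> s} \<le> card {j\<in>{1..n}. x j \<le> t}"
  by (intro card_mono) auto

lemma card_le_le_n: "card {j\<in>{1..n::nat}. P j} \<le> n"
  by (rule order_trans[OF card_mono[of "{1..n}"]]) auto

lemma mem_BH_set_iff:
  "k \<in> BH_set n \<alpha> x \<longleftrightarrow> k \<in> {1..n} \<and> k \<le> card {j\<in>{1..n}. x j \<le> crit \<alpha> n k}"
  unfolding BH_set_def using ord_stat_le_iff[of k n x] by auto

lemma finite_BH_set [simp]: "finite (BH_set n \<alpha> x)"
  unfolding BH_set_def by simp

lemma BH_R_in_BH_set: "BH_set n \<alpha> x \<noteq> {} \<Longrightarrow> BH_R n \<alpha> x \<in> BH_set n \<alpha> x"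
  unfolding BH_R_def by simp

lemma BH_R_ge: "k \<in> BH_set n \<alpha> x \<Longrightarrow> k \<le> BH_R n \<alpha> x"
  unfolding BH_R_def by auto

lemma BH_R_eq_0_iff: "BH_R n \<alpha> x = 0 \<longleftrightarrow> BH_set n \<alpha> x = {}"
proof -
  have "BH_set n \<alpha> x \<noteq> {} \<Longrightarrow> BH_R n \<alpha> x \<noteq> 0"
    using BH_R_in_BH_set[of n \<alpha> x] by (auto simp: mem_BH_set_iff)
  thus ?thesis by (auto simp: BH_R_def)
qed

lemma card_shift_down:
  "card {i\<in>{1..n-1}. x (i+1) \<le> c} = card {l\<in>{2..n::nat}. (x l::real) \<le> c}"
proof -
  have "{l\<in>{2..n}. x l \<le> c} = Suc ` {i\<in>{1..n-1}. x (i+1) \<le> c}"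
  proof (intro set_eqI iffI)
    fix l assume "l \<in> {l\<in>{2..n}. x l \<le> c}"
    then show "l \<in> Suc ` {i\<in>{1..n-1}. x (i+1) \<le> c}"
      by (intro image_eqI[of _ _ "l - 1"]) auto
  qed auto
  thus ?thesis by (simp add: card_image)
qed

lemma D1_iff_card:
  assumes "0 < k" "k < n"
  shows "D1 n \<alpha> k x \<longleftrightarrow> (\<forall>j\<in>{k..n-1}. card {l\<in>{2..n}. x l \<le> crit \<alpha> n (j+1)} < j)"
proof -
  have "crit \<alpha> n (j + 1) < ord_stat (n - 1) (\<lambda>i. x (i + 1)) j
     \<longleftrightarrow> card {l\<in>{2..n}. x l \<le> crit \<alpha> n (j+1)} < j" if "j \<in> {k..n-1}" for j
  proof -
    have "crit \<alpha> n (j + 1) < ord_stat (n - 1) (\<lambda>i. x (i + 1)) j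
       \<longleftrightarrow> \<not> j \<le> card {i\<in>{1..n-1}. x (i+1) \<le> crit \<alpha> n (j+1)}"
      using that assms by (subst ord_stat_le_iff[symmetric]) auto
    thus ?thesis unfolding card_shift_down not_le .
  qed
  thus ?thesis using assms by (simp add: D1_def)
qed

lemma D1_mono:
  assumes "1 \<le> k" "D1 n \<alpha> (k-1) x"
  shows "D1 n \<alpha> k x"
proof (cases "n \<le> k")
  case False
  with assms have "k - 1 \<noteq> 0" "\<forall>j\<in>{k-1..n-1}. crit \<alpha> n (j + 1) < ord_stat (n - 1) (\<lambda>i. x (i + 1)) j"
    by (simp_all add: D1_def split: if_splits)
  hence "\<forall>j\<in>{k..n-1}. crit \<alpha> n (j + 1) < ord_stat (n - 1) (\<lambda>i. x (i + 1)) j"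
    by force
  with False assms(1) show ?thesis by (simp add: D1_def)
qed (use assms(1) in \<open>simp add: D1_def\<close>)

lemma card_le_swap1:
  assumes "i \<in> {1..n}"
  shows "card {l\<in>{2..n}. x (swap1 i l) \<le> t}
       = card {j\<in>{1..n}. (x j::real) \<le> t} - (if x i \<le> t then 1 else 0)"
proof -
  have "swap1 i ` {l\<in>{2..n}. x (swap1 i l) \<le> t} = {j\<in>{1..n}. x j \<le> t} - {i}"
  proof (intro set_eqI iffI)
    fix j assume "j \<in> {j\<in>{1..n}. x j \<le> t} - {i}"
    with assms show "j \<in> swap1 i ` {l\<in>{2..n}. x (swap1 i l) \<le> t}"
      by (intro image_eqI[of _ _ "swap1 i j"]) (auto simp: Transposition.transpose_def)
  next
    fix j assume "j \<in> swap1 i ` {l\<in>{2..n}. x (swap1 i l) \<le> t}"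
    then obtain l where "l \<in> {2..n}" "x (swap1 i l) \<le> t" "j = swap1 i l" by blast
    with assms show "j \<in> {j\<in>{1..n}. x j \<le> t} - {i}"
      by (auto simp: Transposition.transpose_def)
  qed
  moreover have "card (swap1 i ` {l\<in>{2..n}. x (swap1 i l) \<le> t}) = card {l\<in>{2..n}. x (swap1 i l) \<le> t}"
    by (rule card_image) simp
  ultimately have "card {l\<in>{2..n}. x (swap1 i l) \<le> t} = card ({j\<in>{1..n}. x j \<le> t} - {i})"
    by simp
  thus ?thesis using assms by (auto simp: card_Diff_singleton_if)
qed

lemma one_le_card_le:
  assumes "i \<in> {1..n::nat}" "(x i::real) \<le> t"
  shows "1 \<le> card {j\<in>{1..n}. x j \<le> t}"
  using assms card_mono[of "{j\<in>{1..n}. x j \<le> t}" "{i}"] by auto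

text \<open>
  Moving x i to position 1 removes it from the counts that define D1; as x i lies below all
  critical values involved, each of these counts drops by exactly one.
\<close>

lemma D1_swap1_iff:
  assumes i: "i \<in> {1..n}" and xi: "x i \<le> crit \<alpha> n (m + 1)" and \<alpha>: "0 < \<alpha>"
  shows "D1 n \<alpha> m (\<lambda>j. x (swap1 i j)) \<longleftrightarrow> (\<forall>j\<in>BH_set n \<alpha> x. j \<le> m)"
proof -
  let ?N = "\<lambda>j. card {l\<in>{1..n}. x l \<le> crit \<alpha> n j}"
  consider "m = 0" | "n \<le> m" | "0 < m" "m < n" by linarith
  then show ?thesis
  proof cases
    case 1
    with i xi have "1 \<in> BH_set n \<alpha> x"
      using one_le_card_le by (auto simp: mem_BH_set_iff)
    with 1 show ?thesis by (auto simp: D1_def)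
  next
    case 2
    with i show ?thesis by (auto simp: D1_def mem_BH_set_iff)
  next
    case 3
    have "card {l\<in>{2..n}. x (swap1 i l) \<le> crit \<alpha> n (j + 1)} < j \<longleftrightarrow> ?N (j + 1) < j + 1"
      if "j \<in> {m..n-1}" for j
    proof -
      have "x i \<le> crit \<alpha> n (j + 1)"
        using that xi crit_mono[OF \<alpha>, of "m + 1" "j + 1" n] by auto
      then show ?thesis
        using card_le_swap1[OF i] one_le_card_le[OF i] by fastforce
    qed
    then have "D1 n \<alpha> m (\<lambda>j. x (swap1 i j)) \<longleftrightarrow> (\<forall>j\<in>{m..n-1}. ?N (j + 1) < j + 1)"
      using 3 by (simp add: D1_iff_card)
    also have "\<dots> \<longleftrightarrow> (\<forall>j\<in>{m+1..n}. ?N j < j)"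
    proof (intro iffI ballI)
      fix j assume h: "\<forall>j\<in>{m..n-1}. ?N (j + 1) < j + 1" and j: "j \<in> {m+1..n}"
      then have "j - 1 \<in> {m..n-1}" "j - 1 + 1 = j" by auto
      with h show "?N j < j" by metis
    next
      fix j assume "\<forall>j\<in>{m+1..n}. ?N j < j" "j \<in> {m..n-1}"
      then show "?N (j + 1) < j + 1" using 3 by auto
    qed
    also have "\<dots> \<longleftrightarrow> (\<forall>j\<in>BH_set n \<alpha> x. j \<le> m)"
    proof (intro iffI ballI)
      fix j assume h: "\<forall>j\<in>{m+1..n}. ?N j < j" and j: "j \<in> BH_set n \<alpha> x"
      then have "j \<in> {1..n}" "j \<le> ?N j" by (simp_all add: mem_BH_set_iff)
      show "j \<le> m"
      proof (rule ccontr)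
        assume "\<not> j \<le> m"
        with h \<open>j \<in> {1..n}\<close> have "?N j < j" by auto
        with \<open>j \<le> ?N j\<close> show False by simp
      qed
    next
      fix j assume h: "\<forall>j\<in>BH_set n \<alpha> x. j \<le> m" and j: "j \<in> {m+1..n}"
      show "?N j < j"
      proof (rule ccontr)
        assume "\<not> ?N j < j"
        with j have "j \<in> BH_set n \<alpha> x" by (simp add: mem_BH_set_iff)
        with h j show False by auto
      qed
    qed
    finally show ?thesis .
  qed
qed

definition D1_step :: "nat \<Rightarrow> real \<Rightarrow> nat \<Rightarrow> (nat \<Rightarrow> real) \<Rightarrow> bool" where
  "D1_step n \<alpha> k y \<longleftrightarrow> D1 n \<alpha> k y \<and> \<not> D1 n \<alpha> (k - 1) y"

lemma D1_step_swap1_iff: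
  assumes i: "i \<in> {1..n}" and k: "1 \<le> k" and xi: "x i \<le> crit \<alpha> n k" and \<alpha>: "0 < \<alpha>"
  shows "D1_step n \<alpha> k (\<lambda>j. x (swap1 i j)) \<longleftrightarrow> k = BH_R n \<alpha> x"
proof -
  let ?B = "BH_set n \<alpha> x"
  have "x i \<le> crit \<alpha> n (k + 1)"
    using xi crit_mono[OF \<alpha>, of k "k + 1" n] by simp
  then have "D1_step n \<alpha> k (\<lambda>j. x (swap1 i j)) \<longleftrightarrow> (\<forall>j\<in>?B. j \<le> k) \<and> \<not> (\<forall>j\<in>?B. j \<le> k - 1)"
    using D1_swap1_iff[OF i _ \<alpha>, of _ "k - 1"] D1_swap1_iff[OF i _ \<alpha>, of _ k] xi k
    by (simp add: D1_step_def)
  also have "\<dots> \<longleftrightarrow> k \<in> ?B \<and> (\<forall>j\<in>?B. j \<le> k)"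
  proof -
    have "\<not> j \<le> k - 1 \<longleftrightarrow> k \<le> j" for j using k by linarith
    then show ?thesis by (auto intro: le_antisym)
  qed
  also have "\<dots> \<longleftrightarrow> k = BH_R n \<alpha> x"
  proof
    assume h: "k \<in> ?B \<and> (\<forall>j\<in>?B. j \<le> k)"
    then have "BH_R n \<alpha> x \<in> ?B" by (intro BH_R_in_BH_set) auto
    with h show "k = BH_R n \<alpha> x" using BH_R_ge[of k] by (simp add: le_antisym)
  next
    assume "k = BH_R n \<alpha> x"
    with k have "?B \<noteq> {}" using BH_R_eq_0_iff[of n \<alpha> x] by auto
    with \<open>k = BH_R n \<alpha> x\<close> show "k \<in> ?B \<and> (\<forall>j\<in>?B. j \<le> k)"
      using BH_R_in_BH_set BH_R_ge by simp
  qed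
  finally show ?thesis .
qed

lemma A_event_iff_BH_R_le:
  assumes \<alpha>: "0 < \<alpha>" and n: "0 < n"
    and r: "crit \<alpha> n r \<le> tstar" and r_max: "\<And>k. r < k \<Longrightarrow> tstar < crit \<alpha> n k"
  shows "A_event n \<alpha> tstar x \<longleftrightarrow> BH_R n \<alpha> x \<le> r"
proof
  assume A: "A_event n \<alpha> tstar x"
  have "k \<le> r" if k: "k \<in> BH_set n \<alpha> x" for k
  proof (rule ccontr)
    assume "\<not> k \<le> r"
    with r_max have "tstar < crit \<alpha> n k" by simp
    moreover from k have kn: "k \<in> {1..n}" "k \<le> card {j\<in>{1..n}. x j \<le> crit \<alpha> n k}"
      by (simp_all add: mem_BH_set_iff)
    moreover from kn n \<alpha> have "crit \<alpha> n k \<le> \<alpha>" by (simp add: crit_def field_simps)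
    ultimately have "real (card {j\<in>{1..n}. x j \<le> crit \<alpha> n k}) / real n < crit \<alpha> n k / \<alpha>"
      using A unfolding A_event_def emp_cdf_def by auto
    also have "crit \<alpha> n k / \<alpha> = real k / real n" using \<alpha> by (simp add: crit_def)
    finally have "card {j\<in>{1..n}. x j \<le> crit \<alpha> n k} < k"
      using n by (simp add: divide_less_cancel)
    with kn show False by simp
  qed
  then show "BH_R n \<alpha> x \<le> r"
    using BH_R_in_BH_set[of n \<alpha> x] by (cases "BH_set n \<alpha> x = {}") (auto simp: BH_R_def)
next
  assume R: "BH_R n \<alpha> x \<le> r"
  show "A_event n \<alpha> tstar x"
    unfolding A_event_def emp_cdf_def
  proof
    fix t assume t: "t \<in> {tstar<..\<alpha>}"
    let ?m = "card {j\<in>{1..n}. x j \<le> t}"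
    show "real ?m / real n < t / \<alpha>"
    proof (rule ccontr)
      assume "\<not> real ?m / real n < t / \<alpha>"
      then have tm: "t * real n \<le> real ?m * \<alpha>" using \<alpha> n by (simp add: field_simps not_less)
      have "real r * \<alpha> \<le> tstar * real n" using r \<alpha> n by (simp add: crit_def field_simps)
      also have "\<dots> < t * real n" using t n by simp
      finally have "real r * \<alpha> < real ?m * \<alpha>" using tm by linarith
      then have "r < ?m" using \<alpha> by simp
      moreover have "t \<le> crit \<alpha> n ?m" using tm n by (simp add: crit_def field_simps)
      then have "?m \<le> card {j\<in>{1..n}. x j \<le> crit \<alpha> n ?m}" by (rule card_le_mono)
      then have "?m \<in> BH_set n \<alpha> x"
        using \<open>r < ?m\<close> card_le_le_n[of n] by (simp add: mem_BH_set_iff)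
      then have "?m \<le> BH_R n \<alpha> x" by (rule BH_R_ge)
      with R \<open>r < ?m\<close> show False by simp
    qed
  qed
qed

lemma Max_crit_le:
  assumes \<alpha>: "0 < \<alpha>" and n: "0 < n" and tstar: "0 \<le> tstar" "tstar \<le> \<alpha>"
  defines "r \<equiv> Max {i::nat. real i * \<alpha> / real n \<le> tstar}"
  shows "crit \<alpha> n r \<le> tstar" and "\<And>k. r < k \<Longrightarrow> tstar < crit \<alpha> n k"
proof -
  let ?I = "{i::nat. real i * \<alpha> / real n \<le> tstar}"
  have "?I \<subseteq> {..n}"
  proof
    fix i assume "i \<in> ?I"
    then have "real i * \<alpha> \<le> tstar * real n" using n by (simp add: field_simps)
    also have "\<dots> \<le> real n * \<alpha>" using tstar by (simp add: mult.commute mult_right_mono)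
    finally have "real i * \<alpha> \<le> real n * \<alpha>" .
    then show "i \<in> {..n}" using \<alpha> by simp
  qed
  then have fin: "finite ?I" by (rule finite_subset) simp
  have "0 \<in> ?I" using tstar by simp
  then have "r \<in> ?I" unfolding r_def by (intro Max_in[OF fin]) blast
  then show "crit \<alpha> n r \<le> tstar" by (simp add: crit_def)
  show "tstar < crit \<alpha> n k" if "r < k" for k
  proof (rule ccontr)
    assume "\<not> tstar < crit \<alpha> n k"
    then have "k \<in> ?I" by (simp add: crit_def)
    with fin have "k \<le> r" unfolding r_def by (rule Max_ge)
    with that show False by simp
  qed
qed

lemma BH_ratio_eq_sum_D1_step:
  assumes \<alpha>: "0 < \<alpha>" and n: "0 < n" and n0: "n0 \<le> n"
    and r: "crit \<alpha> n r \<le> tstar" and r_max: "\<And>k. r < k \<Longrightarrow> tstar < crit \<alpha> n k"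
  shows "real (BH_V n0 n \<alpha> x) / real (max (BH_R n \<alpha> x) 1) * of_bool (A_event n \<alpha> tstar x)
    = (\<Sum>i\<in>{1..n0}. \<Sum>k\<in>{1..r}.
         of_bool (x i \<le> crit \<alpha> n k \<and> D1_step n \<alpha> k (\<lambda>j. x (swap1 i j))) / real k)"
proof -
  define R where "R = BH_R n \<alpha> x"
  have inner: "(\<Sum>k\<in>{1..r}. of_bool (x i \<le> crit \<alpha> n k \<and> D1_step n \<alpha> k (\<lambda>j. x (swap1 i j))) / real k)
      = of_bool (R \<in> {1..r} \<and> x i \<le> crit \<alpha> n R) / real R" if i: "i \<in> {1..n0}" for i
  proof -
    have "(\<Sum>k\<in>{1..r}. of_bool (x i \<le> crit \<alpha> n k \<and> D1_step n \<alpha> k (\<lambda>j. x (swap1 i j))) / real k)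
        = (\<Sum>k\<in>{1..r}. if k = R then of_bool (x i \<le> crit \<alpha> n R) / real R else 0)"
      using i n0 D1_step_swap1_iff[of i n _ x \<alpha>] \<alpha> unfolding R_def
      by (intro sum.cong) auto
    then show ?thesis by auto
  qed
  have ratio: "real (BH_V n0 n \<alpha> x) / real (max R 1) * of_bool (A_event n \<alpha> tstar x)
      = of_bool (R \<in> {1..r}) * real (card {i\<in>{1..n0}. x i \<le> crit \<alpha> n R}) / real R"
  proof (cases "R = 0")
    case True
    then show ?thesis by (simp add: BH_V_def R_def BH_R_eq_0_iff)
  next
    case False
    then have ne: "BH_set n \<alpha> x \<noteq> {}" by (simp add: R_def BH_R_eq_0_iff)
    from False have R1: "1 \<le> R" by simp
    have "BH_V n0 n \<alpha> x = card {i\<in>{1..n0}. x i \<le> crit \<alpha> n R}"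
      using ne by (simp add: BH_V_def R_def)
    moreover have "A_event n \<alpha> tstar x \<longleftrightarrow> R \<in> {1..r}"
      using A_event_iff_BH_R_le[OF \<alpha> n r r_max, of x] R1 by (simp add: R_def)
    ultimately show ?thesis using R1 by (simp add: max_def)
  qed
  have "(\<Sum>i\<in>{1..n0}. \<Sum>k\<in>{1..r}.
         of_bool (x i \<le> crit \<alpha> n k \<and> D1_step n \<alpha> k (\<lambda>j. x (swap1 i j))) / real k)
      = (\<Sum>i\<in>{1..n0}. of_bool (R \<in> {1..r} \<and> x i \<le> crit \<alpha> n R) / real R)"
    using inner by (rule sum.cong[OF refl])
  also have "\<dots> = of_bool (R \<in> {1..r}) * real (card {i\<in>{1..n0}. x i \<le> crit \<alpha> n R}) / real R"
    by (cases "R \<in> {1..r}") (auto simp: sum_divide_distrib[symmetric] Int_def)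
  finally show ?thesis
    using ratio unfolding R_def by simp
qed

section \<open>Product measures and measurability\<close>

lemma finite_measure_eqI_PiM_finite:
  assumes "finite I" "finite_measure P" "finite_measure Q"
    "sets P = sets (PiM I M)" "sets Q = sets (PiM I M)"
    "\<And>A. (\<And>i. i \<in> I \<Longrightarrow> A i \<in> sets (M i)) \<Longrightarrow> measure P (Pi\<^sub>E I A) = measure Q (Pi\<^sub>E I A)"
  shows "P = Q"
proof (rule measure_eqI_PiM_finite[OF assms(1,4,5)])
  fix A assume "\<And>i. i \<in> I \<Longrightarrow> A i \<in> sets (M i)"
  then show "emeasure P (Pi\<^sub>E I A) = emeasure Q (Pi\<^sub>E I A)"
    using assms(6) finite_measure.emeasure_eq_measure[OF assms(2)]
      finite_measure.emeasure_eq_measure[OF assms(3)] by simp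
next
  show "range (\<lambda>_::nat. \<Pi>\<^sub>E i\<in>I. space (M i)) \<subseteq> prod_algebra I M"
    using space_in_prod_algebra by auto
  show "(\<Union>i::nat. \<Pi>\<^sub>E i\<in>I. space (M i)) = space (PiM I M)" by (simp add: space_PiM)
  show "emeasure P (\<Pi>\<^sub>E i\<in>I. space (M i)) \<noteq> \<infinity>" for i::nat
    using finite_measure.emeasure_finite[OF assms(2)] by simp
qed

lemma measure_pair_measure_Times:
  assumes "prob_space N" "prob_space K" "A \<in> sets N" "B \<in> sets K"
  shows "measure (N \<Otimes>\<^sub>M K) (A \<times> B) = measure N A * measure K B"
proof -
  interpret N: prob_space N by fact
  interpret K: prob_space K by fact
  interpret pair_prob_space N K ..
  have "emeasure (N \<Otimes>\<^sub>M K) (A \<times> B) = emeasure N A * emeasure K B"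
    by (rule K.emeasure_pair_measure_Times[OF assms(3,4)])
  then show ?thesis
    by (simp add: measure_def enn2real_mult)
qed

lemma (in finite_measure) integral_sum_sum_indicator:
  assumes "finite I" "finite K" "\<And>i k. i \<in> I \<Longrightarrow> k \<in> K \<Longrightarrow> A i k \<in> sets M"
  shows "(\<integral>\<omega>. (\<Sum>i\<in>I. \<Sum>k\<in>K. c k * indicator (A i k) \<omega>) \<partial>M) = (\<Sum>i\<in>I. \<Sum>k\<in>K. c k * measure M (A i k))"
proof -
  have integrable: "integrable M (\<lambda>\<omega>. c k * indicator (A i k) \<omega> :: real)" if "i \<in> I" "k \<in> K" for i k
    using assms(3)[OF that] by (intro integrable_mult_right integrable_real_indicator) (simp_all add: less_top[symmetric])
  then show ?thesis
    using assms(3) by (simp add: Bochner_Integration.integral_sum Bochner_Integration.integrable_sum)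
qed

lemma D1_cong_tail:
  assumes "\<forall>j\<in>{2..n}. x j = y j"
  shows "D1 n \<alpha> k x = D1 n \<alpha> k y"
proof (cases "0 < k \<and> k < n")
  case True
  have "\<And>c. {l\<in>{2..n}. x l \<le> c} = {l\<in>{2..n}. y l \<le> c}" using assms by auto
  then show ?thesis using True by (simp add: D1_iff_card)
next
  case False
  then have "k = 0 \<or> n \<le> k" by linarith
  then show ?thesis unfolding D1_def by (elim disjE) simp_all
qed

lemma real_card_eq_sum_of_bool:
  "finite S \<Longrightarrow> real (card {i\<in>S. P i}) = (\<Sum>i\<in>S. of_bool (P i))"
  by (simp add: sum_of_bool_eq Collect_conj_eq)

lemma measurable_card_le:
  assumes "finite S" "S \<subseteq> I"
  shows "(\<lambda>x. real (card {l\<in>S. x l \<le> c})) \<in> borel_measurable (PiM I (\<lambda>_. borel :: real measure))"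
  unfolding real_card_eq_sum_of_bool[OF assms(1)]
proof (rule borel_measurable_sum)
  fix l assume "l \<in> S"
  with assms(2) have "l \<in> I" by blast
  then show "(\<lambda>x. of_bool (x l \<le> c) :: real) \<in> borel_measurable (PiM I (\<lambda>_. borel))"
    by measurable
qed

lemma pred_D1:
  assumes "{2..n} \<subseteq> I"
  shows "Measurable.pred (PiM I (\<lambda>_. borel)) (D1 n \<alpha> k)"
proof (cases "0 < k \<and> k < n")
  case True
  have "D1 n \<alpha> k = (\<lambda>x. \<forall>j\<in>{k..n-1}. real (card {l\<in>{2..n}. x l \<le> crit \<alpha> n (j+1)}) < real j)"
    using True by (simp add: D1_iff_card fun_eq_iff)
  also have "Measurable.pred (PiM I (\<lambda>_. borel)) \<dots>"
  proof (intro pred_intros_finite)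
    fix j
    show "Measurable.pred (PiM I (\<lambda>_. borel)) (\<lambda>x. real (card {l\<in>{2..n}. x l \<le> crit \<alpha> n (j+1)}) < real j)"
    proof (rule borel_measurable_pred_less)
      show "(\<lambda>x. real (card {l\<in>{2..n}. x l \<le> crit \<alpha> n (j+1)})) \<in> borel_measurable (PiM I (\<lambda>_. borel))"
        by (rule measurable_card_le[OF _ assms]) simp
    qed simp
  qed simp
  finally show ?thesis .
next
  case False
  then have "k = 0 \<or> n \<le> k" by linarith
  then show ?thesis unfolding D1_def by (elim disjE) simp_all
qed

section \<open>Exchangeability of the first n0 observations\<close>

abbreviation borel_vec :: "nat set \<Rightarrow> (nat \<Rightarrow> real) measure" where
  "borel_vec I \<equiv> PiM I (\<lambda>_. borel)"

locale iid_block = prob_space M for M :: "'a measure" +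
  fixes \<xi> :: "nat \<Rightarrow> 'a \<Rightarrow> real" and n0 n :: nat
  assumes n0: "1 \<le> n0" "n0 \<le> n"
    and measurable_\<xi>: "\<And>i. i \<in> {1..n} \<Longrightarrow> \<xi> i \<in> borel_measurable M"
    and indep_head: "indep_vars (\<lambda>_. borel) \<xi> {1..n0}"
    and ident_head: "\<And>i. i \<in> {1..n0} \<Longrightarrow> distr M borel (\<xi> i) = distr M borel (\<xi> 1)"
    and indep_blocks: "indep_var
        (borel_vec {1..n0}) (\<lambda>\<omega>. restrict (\<lambda>i. \<xi> i \<omega>) {1..n0})
        (borel_vec {n0<..n}) (\<lambda>\<omega>. restrict (\<lambda>i. \<xi> i \<omega>) {n0<..n})"
begin

definition law :: "nat set \<Rightarrow> (nat \<Rightarrow> real) measure" where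
  "law I = distr M (borel_vec I) (\<lambda>\<omega>. restrict (\<lambda>i. \<xi> i \<omega>) I)"

lemma measurable_restrict_\<xi>:
  "I \<subseteq> {1..n} \<Longrightarrow> (\<lambda>\<omega>. restrict (\<lambda>i. \<xi> i \<omega>) I) \<in> measurable M (borel_vec I)"
  by (intro measurable_restrict measurable_\<xi>) auto

lemma prob_space_law: "I \<subseteq> {1..n} \<Longrightarrow> prob_space (law I)"
  unfolding law_def by (intro prob_space_distr measurable_restrict_\<xi>)

lemma sets_law [simp, measurable_cong]: "sets (law I) = sets (borel_vec I)"
  by (simp add: law_def)

lemma space_law [simp]: "space (law I) = space (borel_vec I)"
  by (simp add: law_def)

lemma measure_law:
  assumes "I \<subseteq> {1..n}" "S \<in> sets (borel_vec I)"
  shows "measure (law I) S = prob {\<omega>\<in>space M. restrict (\<lambda>i. \<xi> i \<omega>) I \<in> S}"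
proof -
  have "measure (law I) S = prob ((\<lambda>\<omega>. restrict (\<lambda>i. \<xi> i \<omega>) I) -` S \<inter> space M)"
    unfolding law_def by (rule measure_distr[OF measurable_restrict_\<xi>[OF assms(1)] assms(2)])
  also have "(\<lambda>\<omega>. restrict (\<lambda>i. \<xi> i \<omega>) I) -` S \<inter> space M = {\<omega>\<in>space M. restrict (\<lambda>i. \<xi> i \<omega>) I \<in> S}"
    by blast
  finally show ?thesis .
qed

lemma measure_law_PiE:
  assumes "I \<subseteq> {1..n}" "\<And>i. i \<in> I \<Longrightarrow> A i \<in> sets borel"
  shows "measure (law I) (Pi\<^sub>E I A) = prob {\<omega>\<in>space M. \<forall>i\<in>I. \<xi> i \<omega> \<in> A i}"
  using assms by (simp add: measure_law sets_PiM_I_finite finite_subset[OF _ finite_atLeastAtMost]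
      restrict_PiE_iff Pi_iff)

lemma prob_all_in_eq_prod:
  assumes A: "\<And>i. i \<in> {1..n} \<Longrightarrow> A i \<in> sets borel"
  shows "prob {\<omega>\<in>space M. \<forall>i\<in>{1..n}. \<xi> i \<omega> \<in> A i}
    = (\<Prod>i\<in>{1..n0}. prob {\<omega>\<in>space M. \<xi> 1 \<omega> \<in> A i}) * prob {\<omega>\<in>space M. \<forall>i\<in>{n0<..n}. \<xi> i \<omega> \<in> A i}"
proof -
  let ?X1 = "\<lambda>\<omega>. restrict (\<lambda>i. \<xi> i \<omega>) {1..n0}"
  let ?X2 = "\<lambda>\<omega>. restrict (\<lambda>i. \<xi> i \<omega>) {n0<..n}"
  have U: "{1..n} = {1..n0} \<union> {n0<..n}" using n0 by auto
  have "{\<omega>\<in>space M. \<forall>i\<in>{1..n}. \<xi> i \<omega> \<in> A i}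
      = (\<lambda>\<omega>. (?X1 \<omega>, ?X2 \<omega>)) -` (Pi\<^sub>E {1..n0} A \<times> Pi\<^sub>E {n0<..n} A) \<inter> space M"
    unfolding U by (auto simp: restrict_PiE_iff Pi_iff)
  moreover have "Pi\<^sub>E {1..n0} A \<in> sets (borel_vec {1..n0})" "Pi\<^sub>E {n0<..n} A \<in> sets (borel_vec {n0<..n})"
    using A n0 by (auto intro!: sets_PiM_I_finite)
  ultimately have "prob {\<omega>\<in>space M. \<forall>i\<in>{1..n}. \<xi> i \<omega> \<in> A i}
     = prob (?X1 -` Pi\<^sub>E {1..n0} A \<inter> space M) * prob (?X2 -` Pi\<^sub>E {n0<..n} A \<inter> space M)"
    using indep_varD[OF indep_blocks] by simp
  also have "?X1 -` Pi\<^sub>E {1..n0} A \<inter> space M = (\<Inter>i\<in>{1..n0}. \<xi> i -` A i \<inter> space M)"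
    using n0 by (auto simp: restrict_PiE_iff Pi_iff)
  also have "prob \<dots> = (\<Prod>i\<in>{1..n0}. prob (\<xi> i -` A i \<inter> space M))"
    using n0 A by (intro indep_varsD[OF indep_head]) auto
  also have "\<dots> = (\<Prod>i\<in>{1..n0}. prob {\<omega>\<in>space M. \<xi> 1 \<omega> \<in> A i})"
  proof (rule prod.cong[OF refl])
    fix i assume i: "i \<in> {1..n0}"
    then have i': "i \<in> {1..n}" "1 \<in> {1..n}" using n0 by auto
    have "prob (\<xi> i -` A i \<inter> space M) = measure (distr M borel (\<xi> i)) (A i)"
      using measurable_\<xi>[OF i'(1)] A[OF i'(1)] by (simp add: measure_distr)
    also have "\<dots> = measure (distr M borel (\<xi> 1)) (A i)" using ident_head[OF i] by simp
    also have "\<dots> = prob (\<xi> 1 -` A i \<inter> space M)"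
      using measurable_\<xi>[OF i'(2)] A[OF i'(1)] by (simp add: measure_distr)
    finally show "prob (\<xi> i -` A i \<inter> space M) = prob {\<omega>\<in>space M. \<xi> 1 \<omega> \<in> A i}"
      by (simp add: vimage_def Int_def conj_commute)
  qed
  also have "?X2 -` Pi\<^sub>E {n0<..n} A \<inter> space M = {\<omega>\<in>space M. \<forall>i\<in>{n0<..n}. \<xi> i \<omega> \<in> A i}"
    by (auto simp: restrict_PiE_iff Pi_iff)
  finally show ?thesis .
qed

lemma measurable_swap1:
  assumes "i0 \<in> {1..n}"
  shows "(\<lambda>\<omega>. restrict (\<lambda>j. \<xi> (swap1 i0 j) \<omega>) {1..n}) \<in> measurable M (borel_vec {1..n})"
proof (intro measurable_restrict measurable_\<xi>)
  fix j assume "j \<in> {1..n}"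
  with assms show "swap1 i0 j \<in> {1..n}" by (auto simp: Transposition.transpose_def)
qed

lemma prob_all_in_swap1:
  assumes i0: "i0 \<in> {1..n0}" and A: "\<And>i. i \<in> {1..n} \<Longrightarrow> A i \<in> sets borel"
  shows "prob {\<omega>\<in>space M. \<forall>j\<in>{1..n}. \<xi> (swap1 i0 j) \<omega> \<in> A j} = prob {\<omega>\<in>space M. \<forall>i\<in>{1..n}. \<xi> i \<omega> \<in> A i}"
proof -
  have i0': "i0 \<in> {1..n}" "1 \<in> {1..n}" using i0 n0 by auto
  have A_swap: "A (swap1 i0 i) \<in> sets borel" if "i \<in> {1..n}" for i
    using A i0' that by (auto simp: Transposition.transpose_def)
  have img: "swap1 i0 ` {1..n} = {1..n}" using i0' by (intro transpose_image_eq) simp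
  have "(\<forall>i\<in>{1..n}. \<xi> i \<omega> \<in> A (swap1 i0 i)) \<longleftrightarrow> (\<forall>j\<in>{1..n}. \<xi> (swap1 i0 j) \<omega> \<in> A j)" for \<omega>
  proof -
    have "(\<forall>i\<in>{1..n}. \<xi> i \<omega> \<in> A (swap1 i0 i)) \<longleftrightarrow> (\<forall>i\<in>swap1 i0 ` {1..n}. \<xi> i \<omega> \<in> A (swap1 i0 i))"
      by (simp only: img)
    also have "\<dots> \<longleftrightarrow> (\<forall>j\<in>{1..n}. \<xi> (swap1 i0 j) \<omega> \<in> A j)" by simp
    finally show ?thesis .
  qed
  then have "prob {\<omega>\<in>space M. \<forall>j\<in>{1..n}. \<xi> (swap1 i0 j) \<omega> \<in> A j}
      = prob {\<omega>\<in>space M. \<forall>i\<in>{1..n}. \<xi> i \<omega> \<in> A (swap1 i0 i)}"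
    by simp
  also have "\<dots> = (\<Prod>i\<in>{1..n0}. prob {\<omega>\<in>space M. \<xi> 1 \<omega> \<in> A (swap1 i0 i)})
      * prob {\<omega>\<in>space M. \<forall>i\<in>{n0<..n}. \<xi> i \<omega> \<in> A (swap1 i0 i)}"
    by (rule prob_all_in_eq_prod[OF A_swap])
  also have "(\<Prod>i\<in>{1..n0}. prob {\<omega>\<in>space M. \<xi> 1 \<omega> \<in> A (swap1 i0 i)})
      = (\<Prod>i\<in>{1..n0}. prob {\<omega>\<in>space M. \<xi> 1 \<omega> \<in> A i})"
    using i0 n0 by (intro prod.reindex_bij_witness[where i="swap1 i0" and j="swap1 i0"])
      (auto simp: Transposition.transpose_def)
  also have "{\<omega>\<in>space M. \<forall>i\<in>{n0<..n}. \<xi> i \<omega> \<in> A (swap1 i0 i)} = {\<omega>\<in>space M. \<forall>i\<in>{n0<..n}. \<xi> i \<omega> \<in> A i}"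
    using i0 by auto
  finally show ?thesis
    using prob_all_in_eq_prod[of A, OF A] by simp
qed

lemma law_swap1:
  assumes i0: "i0 \<in> {1..n0}"
  shows "distr M (borel_vec {1..n}) (\<lambda>\<omega>. restrict (\<lambda>j. \<xi> (swap1 i0 j) \<omega>) {1..n}) = law {1..n}"
proof (rule finite_measure_eqI_PiM_finite[where I="{1..n}" and M="\<lambda>_. borel"])
  have measurable_swap: "(\<lambda>\<omega>. restrict (\<lambda>j. \<xi> (swap1 i0 j) \<omega>) {1..n}) \<in> measurable M (borel_vec {1..n})"
    using i0 n0 by (intro measurable_swap1) simp
  then show "finite_measure (distr M (borel_vec {1..n}) (\<lambda>\<omega>. restrict (\<lambda>j. \<xi> (swap1 i0 j) \<omega>) {1..n}))"
    by (intro prob_space.finite_measure prob_space_distr)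
  show "finite_measure (law {1..n})"
    by (intro prob_space.finite_measure prob_space_law) simp
  fix A :: "nat \<Rightarrow> real set" assume A: "\<And>i. i \<in> {1..n} \<Longrightarrow> A i \<in> sets borel"
  have "measure (distr M (borel_vec {1..n}) (\<lambda>\<omega>. restrict (\<lambda>j. \<xi> (swap1 i0 j) \<omega>) {1..n})) (Pi\<^sub>E {1..n} A)
      = prob {\<omega>\<in>space M. \<forall>j\<in>{1..n}. \<xi> (swap1 i0 j) \<omega> \<in> A j}"
    using A by (subst measure_distr[OF measurable_swap]) (auto intro!: sets_PiM_I_finite arg_cong[where f=prob]
        simp: restrict_PiE_iff Pi_iff)
  also have "\<dots> = measure (law {1..n}) (Pi\<^sub>E {1..n} A)"
    using prob_all_in_swap1[OF i0, of A, OF A] measure_law_PiE[of "{1..n}" A, OF _ A] by simp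
  finally show "measure (distr M (borel_vec {1..n}) (\<lambda>\<omega>. restrict (\<lambda>j. \<xi> (swap1 i0 j) \<omega>) {1..n})) (Pi\<^sub>E {1..n} A)
      = measure (law {1..n}) (Pi\<^sub>E {1..n} A)" .
qed simp_all

lemma prob_all_in_split_head:
  assumes A: "\<And>i. i \<in> {1..n} \<Longrightarrow> A i \<in> sets borel"
  shows "prob {\<omega>\<in>space M. \<forall>i\<in>{1..n}. \<xi> i \<omega> \<in> A i}
    = prob {\<omega>\<in>space M. \<xi> 1 \<omega> \<in> A 1} * prob {\<omega>\<in>space M. \<forall>i\<in>{2..n}. \<xi> i \<omega> \<in> A i}"
proof -
  let ?P = "\<lambda>B. prob {\<omega>\<in>space M. \<xi> 1 \<omega> \<in> B}"
  let ?Q = "prob {\<omega>\<in>space M. \<forall>i\<in>{n0<..n}. \<xi> i \<omega> \<in> A i}"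
  define A' where "A' = A(1 := UNIV)"
  have A': "\<And>i. i \<in> {1..n} \<Longrightarrow> A' i \<in> sets borel" using A by (simp add: A'_def)
  have prod_split: "(\<Prod>i\<in>{1..n0}. f i) = f 1 * (\<Prod>i\<in>{2..n0}. f i)" for f :: "nat \<Rightarrow> real"
    using n0 prod.atLeast_Suc_atMost[of 1 n0 f] by (simp add: numeral_2_eq_2)
  have "prob {\<omega>\<in>space M. \<forall>i\<in>{1..n}. \<xi> i \<omega> \<in> A i} = ?P (A 1) * (\<Prod>i\<in>{2..n0}. ?P (A i)) * ?Q"
    using prob_all_in_eq_prod[of A, OF A] prod_split by simp
  moreover have "prob {\<omega>\<in>space M. \<forall>i\<in>{1..n}. \<xi> i \<omega> \<in> A' i} = (\<Prod>i\<in>{2..n0}. ?P (A i)) * ?Q"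
    using prob_all_in_eq_prod[of A', OF A'] prod_split n0 by (simp add: A'_def prob_space)
  moreover have "{\<omega>\<in>space M. \<forall>i\<in>{1..n}. \<xi> i \<omega> \<in> A' i} = {\<omega>\<in>space M. \<forall>i\<in>{2..n}. \<xi> i \<omega> \<in> A i}"
  proof -
    have "{1..n} = insert 1 {2..n}" using n0 by auto
    then show ?thesis by (auto simp: A'_def)
  qed
  ultimately show ?thesis by simp
qed

definition cons1 :: "real \<times> (nat \<Rightarrow> real) \<Rightarrow> nat \<Rightarrow> real" where
  "cons1 p = restrict (\<lambda>j. if j = 1 then fst p else snd p j) {1..n}"

lemma measurable_cons1: "cons1 \<in> measurable (borel \<Otimes>\<^sub>M borel_vec {2..n}) (borel_vec {1..n})"
  unfolding cons1_def
proof (rule measurable_restrict)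
  fix j assume j: "j \<in> {1..n}"
  show "(\<lambda>p::real \<times> (nat \<Rightarrow> real). if j = 1 then fst p else snd p j) \<in> borel_measurable (borel \<Otimes>\<^sub>M borel_vec {2..n})"
  proof (cases "j = 1")
    case False
    with j have "j \<in> {2..n}" by auto
    then have "(\<lambda>p::real \<times> (nat \<Rightarrow> real). snd p j) \<in> borel_measurable (borel \<Otimes>\<^sub>M borel_vec {2..n})"
      by (intro measurable_compose[OF measurable_snd measurable_component_singleton])
    with False show ?thesis by simp
  qed simp
qed

lemma cons1_tail: "j \<in> {2..n} \<Longrightarrow> cons1 (u, z) j = z j"
  by (simp add: cons1_def)

lemma cons1_in_PiE_iff:
  assumes "z \<in> space (borel_vec {2..n})"
  shows "cons1 (u, z) \<in> Pi\<^sub>E {1..n} A \<longleftrightarrow> u \<in> A 1 \<and> z \<in> Pi\<^sub>E {2..n} A"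
proof -
  have "{1..n} = insert 1 {2..n}" using n0 by auto
  then have "cons1 (u, z) \<in> Pi\<^sub>E {1..n} A \<longleftrightarrow> u \<in> A 1 \<and> (\<forall>j\<in>{2..n}. z j \<in> A j)"
    by (auto simp: cons1_def restrict_PiE_iff Pi_iff)
  with assms show ?thesis by (auto simp: space_PiM PiE_iff)
qed

lemma measurable_cons1_head_tail:
  "cons1 \<in> measurable (distr M borel (\<xi> 1) \<Otimes>\<^sub>M law {2..n}) (borel_vec {1..n})"
proof -
  have sets_pair: "sets (distr M borel (\<xi> 1) \<Otimes>\<^sub>M law {2..n}) = sets (borel \<Otimes>\<^sub>M borel_vec {2..n})"
    by (rule sets_pair_measure_cong) simp_all
  show ?thesis using measurable_cons1 by (simp add: measurable_cong_sets[OF sets_pair refl])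
qed

lemma cons1_vimage_PiE:
  "cons1 -` Pi\<^sub>E {1..n} A \<inter> space (distr M borel (\<xi> 1) \<Otimes>\<^sub>M law {2..n}) = A 1 \<times> Pi\<^sub>E {2..n} A"
proof -
  have "p \<in> cons1 -` Pi\<^sub>E {1..n} A \<inter> space (distr M borel (\<xi> 1) \<Otimes>\<^sub>M law {2..n})
      \<longleftrightarrow> p \<in> A 1 \<times> Pi\<^sub>E {2..n} A" for p
  proof (cases p)
    case (Pair u z)
    have "Pi\<^sub>E {2..n} A \<subseteq> space (borel_vec {2..n})" by (auto simp: space_PiM)
    then show ?thesis using cons1_in_PiE_iff[of z u A] by (auto simp: Pair space_pair_measure)
  qed
  then show ?thesis by blast
qed

lemma law_split_head:
  "law {1..n} = distr (distr M borel (\<xi> 1) \<Otimes>\<^sub>M law {2..n}) (borel_vec {1..n}) cons1"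
proof -
  have \<xi>1: "\<xi> 1 \<in> borel_measurable M" using measurable_\<xi> n0 by simp
  have head: "prob_space (distr M borel (\<xi> 1))" by (rule prob_space_distr[OF \<xi>1])
  have tail: "prob_space (law {2..n})" by (rule prob_space_law) simp
  note measurable = measurable_cons1_head_tail
  show ?thesis
  proof (rule finite_measure_eqI_PiM_finite[where I="{1..n}" and M="\<lambda>_. borel"])
    show "finite_measure (law {1..n})"
      by (intro prob_space.finite_measure prob_space_law) simp
    show "finite_measure (distr (distr M borel (\<xi> 1) \<Otimes>\<^sub>M law {2..n}) (borel_vec {1..n}) cons1)"
      using prob_space.prob_space_distr[OF prob_space_pair[OF head tail] measurable]
      by (rule prob_space.finite_measure)
    fix A :: "nat \<Rightarrow> real set" assume A: "\<And>i. i \<in> {1..n} \<Longrightarrow> A i \<in> sets borel"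
    have sets_A: "Pi\<^sub>E {1..n} A \<in> sets (borel_vec {1..n})" "Pi\<^sub>E {2..n} A \<in> sets (law {2..n})"
      "A 1 \<in> sets (distr M borel (\<xi> 1))"
      using A n0 by (auto intro!: sets_PiM_I_finite)
    have "measure (distr (distr M borel (\<xi> 1) \<Otimes>\<^sub>M law {2..n}) (borel_vec {1..n}) cons1) (Pi\<^sub>E {1..n} A)
        = measure (distr M borel (\<xi> 1) \<Otimes>\<^sub>M law {2..n}) (A 1 \<times> Pi\<^sub>E {2..n} A)"
      unfolding measure_distr[OF measurable sets_A(1)] cons1_vimage_PiE ..
    also have "\<dots> = measure (distr M borel (\<xi> 1)) (A 1) * measure (law {2..n}) (Pi\<^sub>E {2..n} A)"
      by (rule measure_pair_measure_Times[OF head tail sets_A(3,2)])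
    also have "\<dots> = prob {\<omega>\<in>space M. \<xi> 1 \<omega> \<in> A 1} * prob {\<omega>\<in>space M. \<forall>i\<in>{2..n}. \<xi> i \<omega> \<in> A i}"
    proof -
      have "measure (distr M borel (\<xi> 1)) (A 1) = prob (\<xi> 1 -` A 1 \<inter> space M)"
        using A n0 by (intro measure_distr[OF \<xi>1]) auto
      also have "\<xi> 1 -` A 1 \<inter> space M = {\<omega>\<in>space M. \<xi> 1 \<omega> \<in> A 1}" by blast
      finally show ?thesis using measure_law_PiE[of "{2..n}" A] A by simp
    qed
    also have "\<dots> = measure (law {1..n}) (Pi\<^sub>E {1..n} A)"
      using prob_all_in_split_head[of A, OF A] measure_law_PiE[of "{1..n}" A, OF _ A] by simp
    finally show "measure (law {1..n}) (Pi\<^sub>E {1..n} A)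
        = measure (distr (distr M borel (\<xi> 1) \<Otimes>\<^sub>M law {2..n}) (borel_vec {1..n}) cons1) (Pi\<^sub>E {1..n} A)" ..
  qed simp_all
qed

lemma pred_head_and_tail:
  assumes "C \<in> sets borel" "Measurable.pred (borel_vec {1..n}) E"
  shows "Measurable.pred (borel_vec {1..n}) (\<lambda>y. y 1 \<in> C \<and> E y)"
proof -
  have "1 \<in> {1..n}" using n0 by simp
  with assms show ?thesis
    by (intro pred_intros_logic pred_sets2[OF _ measurable_component_singleton])
qed

lemma measure_law_head_and_tail:
  assumes C: "C \<in> sets borel" and E: "Measurable.pred (borel_vec {1..n}) E"
    and tail: "\<And>x y. \<forall>j\<in>{2..n}. x j = y j \<Longrightarrow> E x = E y"
  shows "measure (law {1..n}) {y\<in>space (borel_vec {1..n}). y 1 \<in> C \<and> E y}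
    = prob {\<omega>\<in>space M. \<xi> 1 \<omega> \<in> C \<and> E (\<lambda>j. \<xi> j \<omega>)}"
proof -
  have "E (restrict (\<lambda>i. \<xi> i \<omega>) {1..n}) = E (\<lambda>j. \<xi> j \<omega>)" for \<omega>
    by (rule tail) simp
  moreover have "restrict (\<lambda>i. \<xi> i \<omega>) {1..n} \<in> space (borel_vec {1..n})" for \<omega>
    by (simp add: space_PiM)
  ultimately show ?thesis
    using pred_head_and_tail[OF C E] n0 by (simp add: measure_law pred_def)
qed

lemma prob_head_and_tail:
  assumes B: "B \<in> sets borel" and E: "Measurable.pred (borel_vec {1..n}) E"
    and tail: "\<And>x y. \<forall>j\<in>{2..n}. x j = y j \<Longrightarrow> E x = E y"
  shows "prob {\<omega>\<in>space M. \<xi> 1 \<omega> \<in> B \<and> E (\<lambda>j. \<xi> j \<omega>)}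
    = prob {\<omega>\<in>space M. \<xi> 1 \<omega> \<in> B} * prob {\<omega>\<in>space M. E (\<lambda>j. \<xi> j \<omega>)}"
proof -
  have \<xi>1: "\<xi> 1 \<in> borel_measurable M" using measurable_\<xi> n0 by simp
  have head: "prob_space (distr M borel (\<xi> 1))" by (rule prob_space_distr[OF \<xi>1])
  have tail_law: "prob_space (law {2..n})" by (rule prob_space_law) simp
  note measurable = measurable_cons1_head_tail
  define S where "S = {z\<in>space (borel_vec {2..n}). E (cons1 (0, z))}"
  have S: "S \<in> sets (law {2..n})"
    unfolding S_def sets_law
    by (rule pred_sets1[OF _ measurable_compose[OF _ measurable_cons1], unfolded pred_def]) (use E in simp_all)
  have law_head_and_tail: "measure (law {1..n}) {y\<in>space (borel_vec {1..n}). y 1 \<in> C \<and> E y}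
      = measure (distr M borel (\<xi> 1)) C * measure (law {2..n}) S" if C: "C \<in> sets borel" for C
  proof -
    have "cons1 -` {y\<in>space (borel_vec {1..n}). y 1 \<in> C \<and> E y} \<inter> space (distr M borel (\<xi> 1) \<Otimes>\<^sub>M law {2..n})
        = C \<times> S"
    proof -
      have "E (cons1 (u, z)) = E (cons1 (0, z))" for u z
        by (rule tail) (simp add: cons1_tail)
      moreover have "cons1 p \<in> space (borel_vec {1..n})" "cons1 (u, z) 1 = u" for p u z
        using n0 by (auto simp: cons1_def space_PiM)
      ultimately show ?thesis by (auto simp: S_def space_pair_measure)
    qed
    moreover have "{y\<in>space (borel_vec {1..n}). y 1 \<in> C \<and> E y} \<in> sets (borel_vec {1..n})"
      using pred_head_and_tail[OF C E] by (simp add: pred_def)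
    ultimately show ?thesis
      using law_split_head measure_distr[OF measurable]
        measure_pair_measure_Times[OF head tail_law _ S, of C] C by simp
  qed
  have "prob {\<omega>\<in>space M. \<xi> 1 \<omega> \<in> B} = measure (distr M borel (\<xi> 1)) B"
    using measure_distr[OF \<xi>1 B] by (simp add: vimage_def Int_def conj_commute)
  moreover have "prob {\<omega>\<in>space M. E (\<lambda>j. \<xi> j \<omega>)} = measure (law {2..n}) S"
    using measure_law_head_and_tail[of UNIV, OF _ E tail] law_head_and_tail[of UNIV]
      prob_space.prob_space[OF head] by simp
  ultimately show ?thesis
    using measure_law_head_and_tail[OF B E tail] law_head_and_tail[OF B] by simp
qed

lemma
  assumes i0: "i0 \<in> {1..n0}" and B: "B \<in> sets borel" and E: "Measurable.pred (borel_vec {1..n}) E"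
    and tail: "\<And>x y. \<forall>j\<in>{2..n}. x j = y j \<Longrightarrow> E x = E y"
  shows sets_swap1_head_and_tail: "{\<omega>\<in>space M. \<xi> i0 \<omega> \<in> B \<and> E (\<lambda>j. \<xi> (swap1 i0 j) \<omega>)} \<in> events"
    and prob_swap1_head_and_tail: "prob {\<omega>\<in>space M. \<xi> i0 \<omega> \<in> B \<and> E (\<lambda>j. \<xi> (swap1 i0 j) \<omega>)}
      = prob {\<omega>\<in>space M. \<xi> 1 \<omega> \<in> B} * prob {\<omega>\<in>space M. E (\<lambda>j. \<xi> j \<omega>)}"
proof -
  let ?X = "\<lambda>\<omega>. restrict (\<lambda>j. \<xi> (swap1 i0 j) \<omega>) {1..n}"
  let ?S = "{y\<in>space (borel_vec {1..n}). y 1 \<in> B \<and> E y}"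
  have i0': "i0 \<in> {1..n}" "1 \<in> {1..n}" using i0 n0 by auto
  have S: "?S \<in> sets (borel_vec {1..n})"
    using pred_head_and_tail[OF B E] by (simp add: pred_def)
  have "E (?X \<omega>) = E (\<lambda>j. \<xi> (swap1 i0 j) \<omega>)" for \<omega>
    by (rule tail) simp
  moreover have "?X \<omega> \<in> space (borel_vec {1..n})" "?X \<omega> 1 = \<xi> i0 \<omega>" for \<omega>
    using i0' by (simp_all add: space_PiM)
  ultimately have event_eq: "{\<omega>\<in>space M. \<xi> i0 \<omega> \<in> B \<and> E (\<lambda>j. \<xi> (swap1 i0 j) \<omega>)} = ?X -` ?S \<inter> space M"
    by auto
  show "{\<omega>\<in>space M. \<xi> i0 \<omega> \<in> B \<and> E (\<lambda>j. \<xi> (swap1 i0 j) \<omega>)} \<in> events"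
    unfolding event_eq by (rule measurable_sets[OF measurable_swap1[OF i0'(1)] S])
  have "prob {\<omega>\<in>space M. \<xi> i0 \<omega> \<in> B \<and> E (\<lambda>j. \<xi> (swap1 i0 j) \<omega>)}
      = measure (distr M (borel_vec {1..n}) ?X) ?S"
    unfolding event_eq by (rule measure_distr[OF measurable_swap1[OF i0'(1)] S, symmetric])
  also have "\<dots> = prob {\<omega>\<in>space M. \<xi> 1 \<omega> \<in> B \<and> E (\<lambda>j. \<xi> j \<omega>)}"
    unfolding law_swap1[OF i0] by (rule measure_law_head_and_tail[OF B E tail])
  finally show "prob {\<omega>\<in>space M. \<xi> i0 \<omega> \<in> B \<and> E (\<lambda>j. \<xi> (swap1 i0 j) \<omega>)}
      = prob {\<omega>\<in>space M. \<xi> 1 \<omega> \<in> B} * prob {\<omega>\<in>space M. E (\<lambda>j. \<xi> j \<omega>)}"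
    using prob_head_and_tail[OF B E tail] by simp
qed

section \<open>The expectation\<close>

lemma sets_D1: "{\<omega>\<in>space M. D1 n \<alpha> k (\<lambda>j. \<xi> j \<omega>)} \<in> events"
proof -
  have "D1 n \<alpha> k (restrict (\<lambda>i. \<xi> i \<omega>) {1..n}) = D1 n \<alpha> k (\<lambda>j. \<xi> j \<omega>)" for \<omega>
    by (rule D1_cong_tail) simp
  moreover have "Measurable.pred M (\<lambda>\<omega>. D1 n \<alpha> k (restrict (\<lambda>i. \<xi> i \<omega>) {1..n}))"
    using pred_D1[of n "{1..n}"] by (intro pred_sets1[OF _ measurable_restrict_\<xi>]) (simp_all add: pred_def)
  ultimately show ?thesis by (simp add: pred_def)
qed

lemma prob_D1_step_swap1:
  assumes i: "i \<in> {1..n0}" and k: "1 \<le> k"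
  shows "{\<omega>\<in>space M. \<xi> i \<omega> \<le> t \<and> D1_step n \<alpha> k (\<lambda>j. \<xi> (swap1 i j) \<omega>)} \<in> events"
    and "prob {\<omega>\<in>space M. \<xi> i \<omega> \<le> t \<and> D1_step n \<alpha> k (\<lambda>j. \<xi> (swap1 i j) \<omega>)}
       = prob {\<omega>\<in>space M. \<xi> 1 \<omega> \<le> t} *
         (prob {\<omega>\<in>space M. D1 n \<alpha> k (\<lambda>j. \<xi> j \<omega>)} - prob {\<omega>\<in>space M. D1 n \<alpha> (k - 1) (\<lambda>j. \<xi> j \<omega>)})"
proof -
  have E: "Measurable.pred (borel_vec {1..n}) (D1_step n \<alpha> k)"
    unfolding D1_step_def[abs_def] by (intro pred_intros_logic pred_D1) auto
  have tail: "D1_step n \<alpha> k x = D1_step n \<alpha> k y" if "\<forall>j\<in>{2..n}. x j = y j" for x y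
    unfolding D1_step_def using D1_cong_tail[OF that] by simp
  show "{\<omega>\<in>space M. \<xi> i \<omega> \<le> t \<and> D1_step n \<alpha> k (\<lambda>j. \<xi> (swap1 i j) \<omega>)} \<in> events"
    using sets_swap1_head_and_tail[OF i _ E tail, of "{..t}"] by simp
  have "prob {\<omega>\<in>space M. \<xi> i \<omega> \<le> t \<and> D1_step n \<alpha> k (\<lambda>j. \<xi> (swap1 i j) \<omega>)}
      = prob {\<omega>\<in>space M. \<xi> 1 \<omega> \<le> t} * prob {\<omega>\<in>space M. D1_step n \<alpha> k (\<lambda>j. \<xi> j \<omega>)}"
    using prob_swap1_head_and_tail[OF i _ E tail, of "{..t}"] by simp
  also have "{\<omega>\<in>space M. D1_step n \<alpha> k (\<lambda>j. \<xi> j \<omega>)}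
      = {\<omega>\<in>space M. D1 n \<alpha> k (\<lambda>j. \<xi> j \<omega>)} - {\<omega>\<in>space M. D1 n \<alpha> (k - 1) (\<lambda>j. \<xi> j \<omega>)}"
    using D1_mono[OF k] by (auto simp: D1_step_def)
  also have "prob \<dots> = prob {\<omega>\<in>space M. D1 n \<alpha> k (\<lambda>j. \<xi> j \<omega>)} - prob {\<omega>\<in>space M. D1 n \<alpha> (k - 1) (\<lambda>j. \<xi> j \<omega>)}"
    using D1_mono[OF k] by (intro finite_measure_Diff sets_D1) auto
  finally show "prob {\<omega>\<in>space M. \<xi> i \<omega> \<le> t \<and> D1_step n \<alpha> k (\<lambda>j. \<xi> (swap1 i j) \<omega>)}
       = prob {\<omega>\<in>space M. \<xi> 1 \<omega> \<le> t} *
         (prob {\<omega>\<in>space M. D1 n \<alpha> k (\<lambda>j. \<xi> j \<omega>)} - prob {\<omega>\<in>space M. D1 n \<alpha> (k - 1) (\<lambda>j. \<xi> j \<omega>)})" .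
qed

lemma expectation_BH_ratio:
  assumes \<alpha>: "0 < \<alpha>" and tstar: "0 < tstar" "tstar \<le> \<alpha>"
    and cdf: "\<And>t. t \<in> {0..tstar} \<Longrightarrow> prob {\<omega> \<in> space M. \<xi> 1 \<omega> \<le> t} = \<gamma> * t"
  shows "integral\<^sup>L M (\<lambda>\<omega>. real (BH_V n0 n \<alpha> (\<lambda>i. \<xi> i \<omega>))
              / real (max (BH_R n \<alpha> (\<lambda>i. \<xi> i \<omega>)) 1)
              * indicator {\<omega> \<in> space M. A_event n \<alpha> tstar (\<lambda>i. \<xi> i \<omega>)} \<omega>)
         = real n0 / real n * \<gamma> * \<alpha> *
           prob {\<omega> \<in> space M. D1 n \<alpha> (Max {i::nat. real i * \<alpha> / real n \<le> tstar}) (\<lambda>i. \<xi> i \<omega>)}"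
proof -
  have n: "0 < n" using n0 by simp
  define r where "r = Max {i::nat. real i * \<alpha> / real n \<le> tstar}"
  have r: "crit \<alpha> n r \<le> tstar" and r_max: "\<And>k. r < k \<Longrightarrow> tstar < crit \<alpha> n k"
    using Max_crit_le[OF \<alpha> n _ tstar(2)] tstar(1) unfolding r_def by simp_all
  define EV where "EV i k = {\<omega>\<in>space M. \<xi> i \<omega> \<le> crit \<alpha> n k \<and> D1_step n \<alpha> k (\<lambda>j. \<xi> (swap1 i j) \<omega>)}" for i k
  define P where "P k = prob {\<omega>\<in>space M. D1 n \<alpha> k (\<lambda>j. \<xi> j \<omega>)}" for k
  have prob_EV: "prob (EV i k) = real k * (\<gamma> * \<alpha> / real n * (P k - P (k - 1)))"
    if i: "i \<in> {1..n0}" and k: "k \<in> {1..r}" for i k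
  proof -
    have "crit \<alpha> n k \<le> crit \<alpha> n r" using k by (intro crit_mono \<alpha>) simp
    then have "crit \<alpha> n k \<in> {0..tstar}" using \<alpha> r by (simp add: crit_def)
    then show ?thesis
      using prob_D1_step_swap1(2)[OF i, of k "crit \<alpha> n k" \<alpha>] k cdf
      by (simp add: EV_def P_def crit_def)
  qed
  have "integral\<^sup>L M (\<lambda>\<omega>. real (BH_V n0 n \<alpha> (\<lambda>i. \<xi> i \<omega>)) / real (max (BH_R n \<alpha> (\<lambda>i. \<xi> i \<omega>)) 1)
              * indicator {\<omega> \<in> space M. A_event n \<alpha> tstar (\<lambda>i. \<xi> i \<omega>)} \<omega>)
      = integral\<^sup>L M (\<lambda>\<omega>. \<Sum>i\<in>{1..n0}. \<Sum>k\<in>{1..r}. 1 / real k * indicator (EV i k) \<omega>)"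
  proof (rule Bochner_Integration.integral_cong[OF refl])
    fix \<omega> assume "\<omega> \<in> space M"
    then show "real (BH_V n0 n \<alpha> (\<lambda>i. \<xi> i \<omega>)) / real (max (BH_R n \<alpha> (\<lambda>i. \<xi> i \<omega>)) 1)
              * indicator {\<omega> \<in> space M. A_event n \<alpha> tstar (\<lambda>i. \<xi> i \<omega>)} \<omega>
        = (\<Sum>i\<in>{1..n0}. \<Sum>k\<in>{1..r}. 1 / real k * indicator (EV i k) \<omega>)"
      using BH_ratio_eq_sum_D1_step[OF \<alpha> n n0(2) r r_max, of "\<lambda>i. \<xi> i \<omega>"]
      by (simp add: indicator_def EV_def of_bool_def)
  qed
  also have "\<dots> = (\<Sum>i\<in>{1..n0}. \<Sum>k\<in>{1..r}. 1 / real k * prob (EV i k))"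
    using prob_D1_step_swap1(1) by (intro integral_sum_sum_indicator) (auto simp: EV_def)
  also have "\<dots> = (\<Sum>i\<in>{1..n0}. \<gamma> * \<alpha> / real n * (\<Sum>k\<in>{1..r}. P k - P (k - 1)))"
    by (simp add: prob_EV sum_distrib_left)
  also have "(\<Sum>k\<in>{1..r}. P k - P (k - 1)) = P r"
    using sum_telescope''[of 0 r P] by (simp add: P_def D1_def)
  finally show ?thesis by (simp add: P_def r_def)
qed

end

theorem lemma2p3:
  fixes M :: "'a measure" and \<xi> :: "nat \<Rightarrow> 'a \<Rightarrow> real"
    and \<alpha> \<gamma> tstar :: real and n0 n :: nat
  assumes "prob_space M"
    and "0 < \<alpha>" "\<alpha> < 1"
    and "0 \<le> \<gamma>" "\<gamma> \<le> 1 / \<alpha>"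
    and "1 \<le> n0" "n0 \<le> n"
    and "0 < tstar" "tstar \<le> \<alpha>"
    and meas: "\<And>i. i \<in> {1..n} \<Longrightarrow> \<xi> i \<in> borel_measurable M"
    and range01: "\<And>i \<omega>. i \<in> {1..n} \<Longrightarrow> \<omega> \<in> space M \<Longrightarrow> \<xi> i \<omega> \<in> {0..1}"
    and indep: "prob_space.indep_vars M (\<lambda>_. borel) \<xi> {1..n0}"
    and ident: "\<And>i. i \<in> {1..n0} \<Longrightarrow> distr M borel (\<xi> i) = distr M borel (\<xi> 1)"
    and cdf: "\<And>t. t \<in> {0..tstar} \<Longrightarrow> measure M {\<omega> \<in> space M. \<xi> 1 \<omega> \<le> t} = \<gamma> * t"
    and indep_blocks: "prob_space.indep_var M
        (Pi\<^sub>M {1..n0} (\<lambda>_. borel)) (\<lambda>\<omega>. restrict (\<lambda>i. \<xi> i \<omega>) {1..n0})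
        (Pi\<^sub>M {n0<..n} (\<lambda>_. borel)) (\<lambda>\<omega>. restrict (\<lambda>i. \<xi> i \<omega>) {n0<..n})"
  shows "integral\<^sup>L M (\<lambda>\<omega>. real (BH_V n0 n \<alpha> (\<lambda>i. \<xi> i \<omega>))
              / real (max (BH_R n \<alpha> (\<lambda>i. \<xi> i \<omega>)) 1)
              * indicator {\<omega> \<in> space M. A_event n \<alpha> tstar (\<lambda>i. \<xi> i \<omega>)} \<omega>)
         = real n0 / real n * \<gamma> * \<alpha> *
           measure M {\<omega> \<in> space M.
             D1 n \<alpha> (Max {i::nat. real i * \<alpha> / real n \<le> tstar}) (\<lambda>i. \<xi> i \<omega>)}"
proof -
  interpret iid_block M \<xi> n0 n
    by (rule iid_block.intro[OF assms(1) iid_block_axioms.intro[OF assms(6,7) meas indep ident indep_blocks]])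
  show ?thesis
    by (rule expectation_BH_ratio[OF assms(2,8,9) cdf])
qed

end
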